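(* Let $T\in V$ be a target variable. If $\zeta_T=0$ (i.e. $T\notin\Upsilon_i$ for all $i$) and $\Upsilon$ is not conservative, then $pa(T)\subseteq\bigcup_{i=1}^{n}MB_i(T)\subseteq MB(T)$.
   Context: Let $G=(V,E)$ be a DAG (causal Bayesian network) over a finite set $V$ of random variables with joint distribution $P$ satisfying the Markov condition with respect to $G$; causal sufficiency is assumed. For $X\in V$, $pa(X)$ and $ch(X)$ are the parents and children of $X$ in $G$, $sp(X)=\big(\bigcup_{Y\in ch(X)}pa(Y)\big)\setminus\{X\}$ is the set of spouses, and $MB(X)=pa(X)\cup ch(X)\cup sp(X)$ is the Markov blanket. There are $n\ge 1$ intervention experiments; in the $i$-th, the set $\Upsilon_i\subseteq V$ (possibly empty) is manipulated, and $\Upsilon=\{\Upsilon_1,\dots,\Upsilon_n\}$. The post-intervention DAG is $G_i=(V,E_i)$ with $E_i=\{(a,b)\in E: b\notin\Upsilon_i\}$, with distribution $P_i(V)=\prod_{V_j\notin\Upsilon_i}P(V_j\mid pa(V_j))\prod_{V_j\in\Upsilon_i}P_i(V_j)$, and $D_i$ is a dataset drawn from $P_i$. It is assumed that each $P_i$ is faithful to $G_i$ and that conditional independence tests on $D_i$ are reliable (return exactly the conditional independences of $P_i$). $MB_i(T)$ denotes the Markov blanket of $T$ found in $D_i$, i.e. the set of parents, children and spouses of $T$ in $G_i$. $\zeta_T=|\{i:T\in\Upsilon_i\}|$. $\Upsilon$ is called conservative if for every $V_j\in\bigcup_{i=1}^n\Upsilon_i$ there exists $i$ with $V_j\notin\Upsilon_i$.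 *)

theory Defs
  imports Main
begin

definition is_dag :: "'v set \<Rightarrow> ('v \<times> 'v) set \<Rightarrow> bool" where
  "is_dag V E \<longleftrightarrow> finite V \<and> E \<subseteq> V \<times> V \<and> acyclic E"

definition pa :: "('v \<times> 'v) set \<Rightarrow> 'v \<Rightarrow> 'v set" where
  "pa E X = {a. (a, X) \<in> E}"

definition ch :: "('v \<times> 'v) set \<Rightarrow> 'v \<Rightarrow> 'v set" where
  "ch E X = {b. (X, b) \<in> E}"

definition sp :: "('v \<times> 'v) set \<Rightarrow> 'v \<Rightarrow> 'v set" where
  "sp E X = (\<Union>Y\<in>ch E X. pa E Y) - {X}"

definition MB :: "('v \<times> 'v) set \<Rightarrow> 'v \<Rightarrow> 'v set" where
  "MB E X = pa E X \<union> ch E X \<union> sp E X"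

definition post_int :: "('v \<times> 'v) set \<Rightarrow> 'v set \<Rightarrow> ('v \<times> 'v) set" where
  "post_int E U = {(a, b) \<in> E. b \<notin> U}"

definition MB_i :: "('v \<times> 'v) set \<Rightarrow> (nat \<Rightarrow> 'v set) \<Rightarrow> nat \<Rightarrow> 'v \<Rightarrow> 'v set" where
  "MB_i E Ups i T = MB (post_int E (Ups i)) T"

definition zeta :: "(nat \<Rightarrow> 'v set) \<Rightarrow> nat \<Rightarrow> 'v \<Rightarrow> nat" where
  "zeta Ups n T = card {i \<in> {1..n}. T \<in> Ups i}"

definition conservative :: "(nat \<Rightarrow> 'v set) \<Rightarrow> nat \<Rightarrow> bool" where
  "conservative Ups n \<longleftrightarrow>
     (\<forall>v \<in> (\<Union>i\<in>{1..n}. Ups i). \<exists>i\<in>{1..n}. v \<notin> Ups i)"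

end

theory Submission
  imports Defs
begin

text \<open>An intervention only deletes edges, so every Markov blanket found in an experiment lies
  in the original one; and if T is never manipulated, no edge into T is deleted, so T keeps all
  its parents in every experiment.\<close>

lemma pa_mono: "E' \<subseteq> E \<Longrightarrow> pa E' X \<subseteq> pa E X"
  unfolding pa_def by blast

lemma ch_mono: "E' \<subseteq> E \<Longrightarrow> ch E' X \<subseteq> ch E X"
  unfolding ch_def by blast

lemma sp_mono: "E' \<subseteq> E \<Longrightarrow> sp E' X \<subseteq> sp E X"
  unfolding sp_def pa_def ch_def by blast

lemma MB_mono: "E' \<subseteq> E \<Longrightarrow> MB E' X \<subseteq> MB E X"
  unfolding MB_def using pa_mono ch_mono sp_mono by (metis Un_mono)

lemma post_int_subset: "post_int E U \<subseteq> E"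
  unfolding post_int_def by blast

lemma pa_post_int_not_manipulated: "X \<notin> U \<Longrightarrow> pa (post_int E U) X = pa E X"
  unfolding pa_def post_int_def by blast

lemma pa_subset_MB: "pa E X \<subseteq> MB E X"
  unfolding MB_def by blast

lemma zeta_eq_0_iff: "zeta Ups n T = 0 \<longleftrightarrow> (\<forall>i\<in>{1..n}. T \<notin> Ups i)"
  unfolding zeta_def by auto

theorem theorem3:
  fixes V :: "'v set" and E :: "('v \<times> 'v) set"
    and Ups :: "nat \<Rightarrow> 'v set" and n :: nat and T :: 'v
  assumes dag: "is_dag V E"
    and n_pos: "n \<ge> 1"
    and ups_sub: "\<forall>i\<in>{1..n}. Ups i \<subseteq> V"
    and T_in: "T \<in> V"
    and zeta0: "zeta Ups n T = 0"
    and not_cons: "\<not> conservative Ups n"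
  shows "pa E T \<subseteq> (\<Union>i\<in>{1..n}. MB_i E Ups i T) \<and> (\<Union>i\<in>{1..n}. MB_i E Ups i T) \<subseteq> MB E T"
proof
  have "T \<notin> Ups 1"
    using zeta0 n_pos by (simp add: zeta_eq_0_iff)
  then have "pa E T \<subseteq> MB_i E Ups 1 T"
    unfolding MB_i_def using pa_subset_MB pa_post_int_not_manipulated by metis
  then show "pa E T \<subseteq> (\<Union>i\<in>{1..n}. MB_i E Ups i T)"
    using n_pos by auto
  show "(\<Union>i\<in>{1..n}. MB_i E Ups i T) \<subseteq> MB E T"
    unfolding MB_i_def by (intro UN_least MB_mono post_int_subset)
qed

end
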